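(* Let $\mathcal D\subset\mathbb R^n$ be a symmetric dictionary of unit vectors and let $\|\cdot\|_{\mathcal A}$ be its atomic norm. Let $s\ge 1$ and let $S=\{x_{i_1},\dots,x_{i_s}\}\subset\mathcal D$ be $s$ atoms with pairwise coherence \[ \mu_S:=\max_{p\neq q}|\langle x_{i_p},x_{i_q}\rangle|<\frac{1}{s-1} \] (no condition if $s=1$). Let $y\in\mathrm{span}(S)$. Then for every $f\in\mathrm{span}(S)$ (in particular for every iterate $f=f_m$ of a method whose iterates lie in $\mathrm{span}(S)$), with $r=y-f$, \[ \|r\|_2\;\ge\;\frac{\sqrt{1-(s-1)\mu_S}}{\sqrt s}\,\bigl(\|y\|_{\mathcal A}-\|f\|_{\mathcal A}\bigr). \]
   Context: A dictionary $\mathcal D\subset\mathbb R^n$ is a set of unit vectors (Euclidean norm $\|\cdot\|_2$); it is symmetric if $g\in\mathcal D\Rightarrow -g\in\mathcal D$. The atomic norm of $\mathcal D$ is the Minkowski functional of $B=\mathrm{conv}(\mathcal D)$: $\|u\|_{\mathcal A}=\inf\{t>0: u\in tB\}$ (finite for $u\in\mathrm{span}(\mathcal D)$). *)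

theory Defs
  imports "HOL-Analysis.Analysis"
begin

definition dictionary :: "'a::euclidean_space set \<Rightarrow> bool" where
  "dictionary D \<longleftrightarrow> (\<forall>g\<in>D. norm g = 1)"

definition symmetric_dict :: "'a::euclidean_space set \<Rightarrow> bool" where
  "symmetric_dict D \<longleftrightarrow> (\<forall>g\<in>D. - g \<in> D)"

definition atomic_norm :: "'a::euclidean_space set \<Rightarrow> 'a \<Rightarrow> real" where
  "atomic_norm D u = Inf {t. t > 0 \<and> u \<in> (\<lambda>v. t *\<^sub>R v) ` (convex hull D)}"

definition coherence :: "'a::euclidean_space set \<Rightarrow> real" where
  "coherence S = (if card S \<le> 1 then 0
     else Max {\<bar>x \<bullet> z\<bar> | x z. x \<in> S \<and> z \<in> S \<and> x \<noteq> z})"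

end

theory Submission
  imports Defs
begin

text \<open>
  Write \<open>r = y - f = (\<Sum>x\<in>S. c x *\<^sub>R x)\<close>. Since \<open>D\<close> is symmetric, every \<open>\<plusminus>x\<close> with
  \<open>x \<in> S\<close> lies in \<open>convex hull D\<close>, so the atomic norm of \<open>r\<close> is at most the \<open>\<ell>\<^sub>1\<close>-norm of
  the coefficients, and by the triangle inequality for the atomic norm this bounds
  \<open>atomic_norm D y - atomic_norm D f\<close>. On the other hand, bounding the off-diagonal
  entries of the Gram matrix of \<open>S\<close> by the coherence gives
  \<open>norm r\<^sup>2 \<ge> (1 - (s - 1) * coherence S) * \<parallel>c\<parallel>\<^sub>2\<^sup>2\<close>, and Cauchy-Schwarz gives
  \<open>\<parallel>c\<parallel>\<^sub>1 \<le> sqrt s * \<parallel>c\<parallel>\<^sub>2\<close>.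
\<close>

lemma zero_in_convex_hull_symmetric:
  assumes "symmetric_dict D" and "D \<noteq> {}"
  shows "0 \<in> convex hull D"
proof -
  obtain x where x: "x \<in> D" using assms(2) by blast
  then have "- x \<in> D" using assms(1) unfolding symmetric_dict_def by blast
  then have "(1/2 :: real) *\<^sub>R x + (1 - 1/2) *\<^sub>R (- x) \<in> convex hull D"
    using x by (intro convexD[OF convex_convex_hull]) (auto intro: hull_inc)
  then show ?thesis by simp
qed

lemma sum_in_scaled_convex_hull:
  fixes D S :: "'a::euclidean_space set"
  assumes sym: "symmetric_dict D" and "D \<noteq> {}" and SD: "S \<subseteq> D" and fin: "finite S"
    and t: "t > 0" and le_t: "(\<Sum>x\<in>S. \<bar>c x\<bar>) \<le> t"
  shows "(\<Sum>x\<in>S. c x *\<^sub>R x) \<in> (*\<^sub>R) t ` (convex hull D)"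
proof -
  define W where "W = (\<Sum>x\<in>S. \<bar>c x\<bar>)"
  have zero: "0 \<in> convex hull D"
    using zero_in_convex_hull_symmetric[OF sym \<open>D \<noteq> {}\<close>] .
  show ?thesis
  proof (cases "W = 0")
    case True
    then have "\<forall>x\<in>S. c x = 0" using fin unfolding W_def by (simp add: sum_nonneg_eq_0_iff)
    then show ?thesis using zero by (auto intro!: image_eqI[of _ _ 0])
  next
    case False
    then have W_pos: "W > 0" unfolding W_def by (simp add: order_less_le sum_nonneg)
    define v where "v = (\<Sum>x\<in>S. (\<bar>c x\<bar> / W) *\<^sub>R (sgn (c x) *\<^sub>R x))"
    have "v \<in> convex hull D" unfolding v_def
    proof (rule convex_sum[OF fin convex_convex_hull])
      show "(\<Sum>x\<in>S. \<bar>c x\<bar> / W) = 1"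
        using W_pos unfolding W_def by (simp add: sum_divide_distrib[symmetric])
      show "\<And>x. x \<in> S \<Longrightarrow> 0 \<le> \<bar>c x\<bar> / W" using W_pos by simp
      fix x assume "x \<in> S"
      then have "x \<in> D" "- x \<in> D" using SD sym unfolding symmetric_dict_def by auto
      then show "sgn (c x) *\<^sub>R x \<in> convex hull D"
        using zero by (cases "c x > 0"; cases "c x < 0") (auto intro: hull_inc simp: sgn_real_def)
    qed
    then have "(W / t) *\<^sub>R v + (1 - W / t) *\<^sub>R 0 \<in> convex hull D"
      using zero t W_pos le_t unfolding W_def[symmetric]
      by (intro convexD[OF convex_convex_hull]) auto
    moreover have "(\<Sum>x\<in>S. c x *\<^sub>R x) = t *\<^sub>R ((W / t) *\<^sub>R v + (1 - W / t) *\<^sub>R 0)"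
      using t W_pos unfolding v_def by (simp add: scaleR_sum_right abs_mult_sgn)
    ultimately show ?thesis by blast
  qed
qed

lemma span_in_scaled_convex_hull:
  fixes D S :: "'a::euclidean_space set"
  assumes "symmetric_dict D" and "D \<noteq> {}" and "S \<subseteq> D" and "finite S" and "u \<in> span S"
  shows "\<exists>t>0. u \<in> (*\<^sub>R) t ` (convex hull D)"
proof -
  obtain c where u: "u = (\<Sum>x\<in>S. c x *\<^sub>R x)" using assms(4,5) span_finite by blast
  have "(\<Sum>x\<in>S. \<bar>c x\<bar>) + 1 > 0" by (simp add: sum_nonneg add_nonneg_pos)
  then show ?thesis
    using sum_in_scaled_convex_hull[OF assms(1-4)] u by fastforce
qed

lemma atomic_norm_le:
  assumes "t > 0" and "u \<in> (*\<^sub>R) t ` (convex hull D)"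
  shows "atomic_norm D u \<le> t"
  unfolding atomic_norm_def using assms by (intro cInf_lower bdd_belowI[of _ 0]) auto

lemma atomic_norm_sum_le:
  fixes D S :: "'a::euclidean_space set"
  assumes "symmetric_dict D" and "D \<noteq> {}" and "S \<subseteq> D" and "finite S"
  shows "atomic_norm D (\<Sum>x\<in>S. c x *\<^sub>R x) \<le> (\<Sum>x\<in>S. \<bar>c x\<bar>)"
proof (rule field_le_epsilon)
  fix e :: real assume "e > 0"
  then have "(\<Sum>x\<in>S. \<bar>c x\<bar>) + e > 0" by (simp add: sum_nonneg add_nonneg_pos)
  then show "atomic_norm D (\<Sum>x\<in>S. c x *\<^sub>R x) \<le> (\<Sum>x\<in>S. \<bar>c x\<bar>) + e"
    using \<open>e > 0\<close> by (intro atomic_norm_le sum_in_scaled_convex_hull[OF assms]) auto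
qed

text \<open>
  Without the nonemptiness hypotheses the infimum defining the atomic norm would be
  the unspecified value \<open>Inf {}\<close>.
\<close>
lemma atomic_norm_triangle:
  fixes D :: "'a::euclidean_space set"
  assumes u: "\<exists>a>0. u \<in> (*\<^sub>R) a ` (convex hull D)"
    and v: "\<exists>b>0. v \<in> (*\<^sub>R) b ` (convex hull D)"
  shows "atomic_norm D (u + v) \<le> atomic_norm D u + atomic_norm D v"
proof -
  define A where "A w = {t. t > 0 \<and> w \<in> (*\<^sub>R) t ` (convex hull D)}" for w
  have norm_A: "atomic_norm D w = Inf (A w)" for w unfolding atomic_norm_def A_def by simp
  have add: "atomic_norm D (u + v) \<le> a + b" if ab: "a \<in> A u" "b \<in> A v" for a b
  proof -
    obtain k l where a: "a > 0" "k \<in> convex hull D" "u = a *\<^sub>R k"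
      and b: "b > 0" "l \<in> convex hull D" "v = b *\<^sub>R l"
      using ab unfolding A_def by blast
    have "(a / (a + b)) *\<^sub>R k + (b / (a + b)) *\<^sub>R l \<in> convex hull D"
      using a b by (intro convexD[OF convex_convex_hull]) (auto simp: add_divide_distrib[symmetric])
    moreover have "u + v = (a + b) *\<^sub>R ((a / (a + b)) *\<^sub>R k + (b / (a + b)) *\<^sub>R l)"
      using a b by (simp add: scaleR_add_right)
    ultimately show ?thesis using a b by (intro atomic_norm_le) auto
  qed
  have "A u \<noteq> {}" "A v \<noteq> {}" using u v unfolding A_def by auto
  have "atomic_norm D (u + v) - atomic_norm D v \<le> Inf (A u)"
  proof (rule cInf_greatest[OF \<open>A u \<noteq> {}\<close>])
    fix a assume "a \<in> A u"
    have "atomic_norm D (u + v) - a \<le> Inf (A v)"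
      using add[OF \<open>a \<in> A u\<close>] by (intro cInf_greatest[OF \<open>A v \<noteq> {}\<close>]) (simp add: algebra_simps)
    then show "atomic_norm D (u + v) - atomic_norm D v \<le> a" by (simp add: norm_A)
  qed
  then show ?thesis by (simp add: norm_A)
qed

lemma finite_coherence_values:
  assumes "finite S"
  shows "finite {\<bar>x \<bullet> z\<bar> | x z. x \<in> S \<and> z \<in> S \<and> x \<noteq> z}"
proof (rule finite_subset)
  show "{\<bar>x \<bullet> z\<bar> | x z. x \<in> S \<and> z \<in> S \<and> x \<noteq> z} \<subseteq> (\<lambda>(x, z). \<bar>x \<bullet> z\<bar>) ` (S \<times> S)"
    by auto
qed (use assms in simp)

lemma coherence_nonneg: "coherence S \<ge> 0"
proof (cases "card S \<le> 1")
  case False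
  then have "finite S" using card.infinite by force
  obtain x z where "x \<in> S" "z \<in> S" "x \<noteq> z"
    using False by (metis card_le_Suc0_iff_eq One_nat_def card.infinite zero_le)
  then have "\<bar>x \<bullet> z\<bar> \<le> coherence S"
    using False unfolding coherence_def
    by (auto intro!: Max_ge[OF finite_coherence_values[OF \<open>finite S\<close>]])
  then show ?thesis by (meson abs_ge_zero order_trans)
qed (simp add: coherence_def)

lemma abs_inner_le_coherence:
  assumes "finite S" and "x \<in> S" and "z \<in> S" and "x \<noteq> z"
  shows "\<bar>x \<bullet> z\<bar> \<le> coherence S"
proof -
  have "\<not> card S \<le> 1" using assms by (auto simp: card_le_Suc0_iff_eq)
  then show ?thesis
    using assms unfolding coherence_def by (auto intro!: Max_ge[OF finite_coherence_values])
qed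

lemma norm_sum_squared_ge_coherence:
  fixes S :: "'a::euclidean_space set"
  assumes fin: "finite S" and unit: "\<And>x. x \<in> S \<Longrightarrow> norm x = 1"
  shows "(1 - (real (card S) - 1) * coherence S) * (\<Sum>x\<in>S. (c x)\<^sup>2)
    \<le> (norm (\<Sum>x\<in>S. c x *\<^sub>R x))\<^sup>2"
proof -
  define \<mu> where "\<mu> = coherence S"
  define W where "W = (\<Sum>x\<in>S. \<bar>c x\<bar>)"
  define Q where "Q = (\<Sum>x\<in>S. (c x)\<^sup>2)"
  define off where "off x = (\<Sum>z\<in>S - {x}. c x * c z * (x \<bullet> z))" for x
  have off_ge: "off x \<ge> - \<mu> * (\<bar>c x\<bar> * W - (c x)\<^sup>2)" if x: "x \<in> S" for x
  proof -
    have "- \<mu> * (\<bar>c x\<bar> * \<bar>c z\<bar>) \<le> c x * c z * (x \<bullet> z)" if z: "z \<in> S - {x}" for z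
    proof -
      have "\<bar>c x * c z * (x \<bullet> z)\<bar> \<le> \<bar>c x\<bar> * \<bar>c z\<bar> * \<mu>"
        using abs_inner_le_coherence[OF fin x, of z] z unfolding \<mu>_def
        by (auto simp: abs_mult intro!: mult_left_mono)
      then show ?thesis by (simp add: abs_le_iff algebra_simps)
    qed
    then have "off x \<ge> (\<Sum>z\<in>S - {x}. - \<mu> * (\<bar>c x\<bar> * \<bar>c z\<bar>))"
      unfolding off_def by (rule sum_mono)
    also have "(\<Sum>z\<in>S - {x}. - \<mu> * (\<bar>c x\<bar> * \<bar>c z\<bar>))
        = - \<mu> * \<bar>c x\<bar> * (\<Sum>z\<in>S - {x}. \<bar>c z\<bar>)"
      by (simp add: sum_distrib_left mult.assoc)
    also have "(\<Sum>z\<in>S - {x}. \<bar>c z\<bar>) = W - \<bar>c x\<bar>"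
      using fin x unfolding W_def by (simp add: sum_diff1)
    finally show ?thesis by (simp add: algebra_simps power2_eq_square)
  qed
  have "(norm (\<Sum>x\<in>S. c x *\<^sub>R x))\<^sup>2 = (\<Sum>x\<in>S. \<Sum>z\<in>S. c x * c z * (x \<bullet> z))"
    by (simp add: power2_norm_eq_inner inner_sum_left inner_sum_right sum_distrib_left
        inner_commute mult.assoc mult.left_commute)
  also have "\<dots> = (\<Sum>x\<in>S. (c x)\<^sup>2 + off x)"
    unfolding off_def using fin unit
    by (intro sum.cong refl) (simp add: sum.remove power2_eq_square norm_eq_1)
  also have "\<dots> \<ge> (\<Sum>x\<in>S. (c x)\<^sup>2 - \<mu> * (\<bar>c x\<bar> * W - (c x)\<^sup>2))"
    using off_ge by (intro sum_mono) fastforce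
  also have "(\<Sum>x\<in>S. (c x)\<^sup>2 - \<mu> * (\<bar>c x\<bar> * W - (c x)\<^sup>2)) = Q - \<mu> * (W\<^sup>2 - Q)"
    unfolding Q_def W_def
    by (simp add: sum.distrib sum_subtractf sum_distrib_left sum_distrib_right power2_eq_square algebra_simps)
  also have "Q - \<mu> * (W\<^sup>2 - Q) \<ge> (1 - (real (card S) - 1) * \<mu>) * Q"
  proof -
    have "W\<^sup>2 \<le> Q * card S"
      unfolding W_def Q_def using sum_squared_le_sum_of_squares[of "\<lambda>x. \<bar>c x\<bar>" S] by simp
    then have "\<mu> * W\<^sup>2 \<le> \<mu> * (Q * card S)"
      using coherence_nonneg[of S] unfolding \<mu>_def by (rule mult_left_mono)
    then show ?thesis by (simp add: algebra_simps)
  qed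
  finally show ?thesis unfolding \<mu>_def Q_def .
qed

lemma coherence_l1_le_norm_sum:
  fixes S :: "'a::euclidean_space set"
  assumes "finite S" and "\<And>x. x \<in> S \<Longrightarrow> norm x = 1"
    and nonneg: "1 - (real (card S) - 1) * coherence S \<ge> 0"
  shows "sqrt (1 - (real (card S) - 1) * coherence S) / sqrt (card S) * (\<Sum>x\<in>S. \<bar>c x\<bar>)
    \<le> norm (\<Sum>x\<in>S. c x *\<^sub>R x)"
proof -
  define \<alpha> where "\<alpha> = 1 - (real (card S) - 1) * coherence S"
  define W where "W = (\<Sum>x\<in>S. \<bar>c x\<bar>)"
  define Q where "Q = (\<Sum>x\<in>S. (c x)\<^sup>2)"
  have "W \<ge> 0" unfolding W_def by (simp add: sum_nonneg)
  then have "sqrt \<alpha> / sqrt (card S) * W = sqrt (\<alpha> * (W\<^sup>2 / card S))"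
    by (simp add: real_sqrt_mult real_sqrt_divide)
  also have "\<dots> \<le> sqrt (\<alpha> * Q)"
  proof (intro real_sqrt_le_mono mult_left_mono)
    have "W\<^sup>2 \<le> Q * card S"
      unfolding W_def Q_def using sum_squared_le_sum_of_squares[of "\<lambda>x. \<bar>c x\<bar>" S] by simp
    moreover have "Q \<ge> 0" unfolding Q_def by (simp add: sum_nonneg)
    ultimately show "W\<^sup>2 / card S \<le> Q" by (cases "card S = 0") (auto simp: divide_le_eq)
  qed (use nonneg in \<open>simp add: \<alpha>_def\<close>)
  also have "\<dots> \<le> sqrt ((norm (\<Sum>x\<in>S. c x *\<^sub>R x))\<^sup>2)"
    unfolding \<alpha>_def Q_def using norm_sum_squared_ge_coherence[OF assms(1,2)] by (rule real_sqrt_le_mono)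
  finally show ?thesis unfolding \<alpha>_def W_def by simp
qed

theorem mainTheorem2:
  fixes D S :: "'a::euclidean_space set" and s :: nat and y f :: 'a
  assumes "dictionary D" and "symmetric_dict D"
    and "S \<subseteq> D" and "finite S" and "card S = s" and "s \<ge> 1"
    and "s = 1 \<or> coherence S < 1 / (real s - 1)"
    and "y \<in> span S" and "f \<in> span S"
  shows "norm (y - f) \<ge>
    sqrt (1 - (real s - 1) * coherence S) / sqrt (real s) * (atomic_norm D y - atomic_norm D f)"
proof -
  define \<alpha> where "\<alpha> = 1 - (real s - 1) * coherence S"
  have "D \<noteq> {}" using assms(3-6) by auto
  note scaled_hull = span_in_scaled_convex_hull[OF assms(2) \<open>D \<noteq> {}\<close> assms(3,4)]
  have unit: "\<And>x. x \<in> S \<Longrightarrow> norm x = 1" using assms(1,3) unfolding dictionary_def by blast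
  have "\<alpha> \<ge> 0"
    using assms(6,7) by (cases "s = 1") (auto simp: \<alpha>_def field_simps)
  obtain c where r: "y - f = (\<Sum>x\<in>S. c x *\<^sub>R x)"
    using span_diff[OF assms(8,9)] span_finite[OF assms(4)] by blast
  have "atomic_norm D y \<le> atomic_norm D f + atomic_norm D (y - f)"
    using atomic_norm_triangle[OF scaled_hull scaled_hull] span_diff assms(8,9) by force
  also have "atomic_norm D (y - f) \<le> (\<Sum>x\<in>S. \<bar>c x\<bar>)"
    unfolding r using atomic_norm_sum_le[OF assms(2) \<open>D \<noteq> {}\<close> assms(3,4)] .
  finally have "sqrt \<alpha> / sqrt s * (atomic_norm D y - atomic_norm D f)
      \<le> sqrt \<alpha> / sqrt s * (\<Sum>x\<in>S. \<bar>c x\<bar>)"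
    using \<open>\<alpha> \<ge> 0\<close> by (intro mult_left_mono) auto
  also have "\<dots> \<le> norm (y - f)"
    unfolding r using coherence_l1_le_norm_sum[OF assms(4) unit] \<open>\<alpha> \<ge> 0\<close> assms(5)
    by (simp add: \<alpha>_def)
  finally show ?thesis unfolding \<alpha>_def .
qed

end
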